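(* Let $A=KQ/I$ be a finite-dimensional gentle algebra over the field $K$, let $B$ be a band for $A$ and let $q\ge 1$ be an integer. Put $\mathbf{d}=q\cdot\mathbf{dim}\,M(B,\lambda,1)$ (independent of $\lambda$). Then, in the Zariski topology of the module variety $\mathrm{mod}(A,\mathbf{d})$, $$\overline{\mathcal{O}_{B^{\times q}}}=\overline{\bigcup_{\lambda_1,\dots,\lambda_q\in K^*}\mathcal{O}_{M(B,\lambda_1,1)\oplus\cdots\oplus M(B,\lambda_q,1)}},$$ where $\mathcal{O}_M$ denotes the $\mathrm{GL}_{\mathbf{d}}$-orbit of (the points isomorphic to) a module $M$.
   Context: Letters are arrows $\alpha\in Q_1$ (direct letters, traversed from $s(\alpha)$ to $t(\alpha)$) and formal inverses $\alpha^{-1}$ (inverse letters, traversed from $t(\alpha)$ to $s(\alpha)$). A string is a walk $c_1\cdots c_m$ in $Q$ which is reduced (no letter followed by its own inverse) and avoids the relations of $I$ (and their inverses); there are trivial strings $e_v$ of length $0$; a string is identified with its inverse walk. A band is a closed walk $b_1\cdots b_m$ ($m\ge1$) all of whose powers are strings, considered up to cyclic rotation and inversion; it is minimal if it is not of the form $(B')^r$ with $r\ge 2$. For a band $B=b_1\cdots b_m$ with vertex positions $v_1,\dots,v_m$ ($b_t$ goes from $v_t$ to $v_{t+1}$, $v_{m+1}=v_1$), $\lambda\in K^*$ and $q\ge 1$, the band module $M(B,\lambda,q)$ places a copy of $K^q$ at each position $t$ (the space at a vertex $x$ of $Q$ is the direct sum of the copies at positions $t$ with $v_t=x$); each letter $b_t$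 gives the arrow it involves acting between the copies at positions $t$ and $t+1$ by the identity, except for one fixed letter, where it acts by the Jordan block $J(\lambda,q)$. $\mathrm{mod}(A,\mathbf{d})$ is the affine variety of representations of $(Q,I)$ with dimension vector $\mathbf{d}$, with $\mathrm{GL}_{\mathbf{d}}$ acting by base change. For a finite multi-set $\mathcal{D}$ consisting of strings $C_1,\dots,C_s$ and pairwise distinct bands $B_1,\dots,B_t$ with multiplicities $q_1,\dots,q_t$ (written $B_j^{\times q_j}$), its family $\mathcal{O}_{\mathcal{D}}\subseteq\mathrm{mod}(A,\mathbf{d})$ ($\mathbf{d}$ the total dimension vector) is the union of the orbits of all modules $\bigoplus_i M(C_i)\oplus\bigoplus_j\bigoplus_k M(B_j,\lambda_{jk},q_{jk})$ where $(q_{jk})_k$ is a partition of $q_j$ and $\lambda_{jk}\in K^*$; here $M(C)$ is the string module (a copy of $K$ at each vertex position of $C$, arrows acting by identities along the letters of $C$). Standing assumption: $K$ is an algebraically closed field. *)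

theory Defs
  imports "HOL-Computational_Algebra.Polynomial"
begin

text \<open>A bound quiver (Q,I) is given by a vertex set Q0 (verts), an arrow set Q1 (arrows),
source and target maps s, t, and a set R of paths of length two generating I.
A pair (a,b) in R stands for the path "first a, then b" (so t a = s b).\<close>

definition quiver :: "'v set \<Rightarrow> 'a set \<Rightarrow> ('a \<Rightarrow> 'v) \<Rightarrow> ('a \<Rightarrow> 'v) \<Rightarrow> bool" where
  "quiver Q0 Q1 s t \<longleftrightarrow> finite Q0 \<and> finite Q1 \<and> s ` Q1 \<subseteq> Q0 \<and> t ` Q1 \<subseteq> Q0"

definition nonzero_path :: "'a set \<Rightarrow> ('a \<Rightarrow> 'v) \<Rightarrow> ('a \<Rightarrow> 'v) \<Rightarrow> ('a \<times> 'a) set \<Rightarrow> 'a list \<Rightarrow> bool" where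
  "nonzero_path Q1 s t R p \<longleftrightarrow> set p \<subseteq> Q1 \<and>
     (\<forall>i. Suc i < length p \<longrightarrow> t (p ! i) = s (p ! Suc i) \<and> (p ! i, p ! Suc i) \<notin> R)"

definition gentle :: "'v set \<Rightarrow> 'a set \<Rightarrow> ('a \<Rightarrow> 'v) \<Rightarrow> ('a \<Rightarrow> 'v) \<Rightarrow> ('a \<times> 'a) set \<Rightarrow> bool" where
  "gentle Q0 Q1 s t R \<longleftrightarrow>
     quiver Q0 Q1 s t \<and>
     R \<subseteq> {(a, b). a \<in> Q1 \<and> b \<in> Q1 \<and> t a = s b} \<and>
     (\<forall>x\<in>Q0. card {a\<in>Q1. s a = x} \<le> 2 \<and> card {a\<in>Q1. t a = x} \<le> 2) \<and>
     (\<forall>b\<in>Q1.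
        card {a\<in>Q1. t a = s b \<and> (a, b) \<in> R} \<le> 1 \<and>
        card {a\<in>Q1. t a = s b \<and> (a, b) \<notin> R} \<le> 1 \<and>
        card {c\<in>Q1. t b = s c \<and> (b, c) \<in> R} \<le> 1 \<and>
        card {c\<in>Q1. t b = s c \<and> (b, c) \<notin> R} \<le> 1)"

text \<open>Finite-dimensionality of A = KQ/I: the paths avoiding R have bounded length
(equivalently, I is admissible / there are only finitely many nonzero paths).\<close>
definition fin_dim :: "'a set \<Rightarrow> ('a \<Rightarrow> 'v) \<Rightarrow> ('a \<Rightarrow> 'v) \<Rightarrow> ('a \<times> 'a) set \<Rightarrow> bool" where
  "fin_dim Q1 s t R \<longleftrightarrow> (\<exists>N. \<forall>p. nonzero_path Q1 s t R p \<longrightarrow> length p < N)"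

text \<open>A letter is (a, True) for the direct letter a, (a, False) for the inverse letter a^-1.\<close>

fun lsrc :: "('a \<Rightarrow> 'v) \<Rightarrow> ('a \<Rightarrow> 'v) \<Rightarrow> 'a \<times> bool \<Rightarrow> 'v" where
  "lsrc s t (a, d) = (if d then s a else t a)"

fun ltgt :: "('a \<Rightarrow> 'v) \<Rightarrow> ('a \<Rightarrow> 'v) \<Rightarrow> 'a \<times> bool \<Rightarrow> 'v" where
  "ltgt s t (a, d) = (if d then t a else s a)"

fun linv :: "'a \<times> bool \<Rightarrow> 'a \<times> bool" where
  "linv (a, d) = (a, \<not> d)"

fun lrel :: "('a \<times> 'a) set \<Rightarrow> 'a \<times> bool \<Rightarrow> 'a \<times> bool \<Rightarrow> bool" where
  "lrel R (a, d) (b, e) =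
     ((d \<and> e \<and> (a, b) \<in> R) \<or> (\<not> d \<and> \<not> e \<and> (b, a) \<in> R))"

definition is_string_word ::
  "'a set \<Rightarrow> ('a \<Rightarrow> 'v) \<Rightarrow> ('a \<Rightarrow> 'v) \<Rightarrow> ('a \<times> 'a) set \<Rightarrow> ('a \<times> bool) list \<Rightarrow> bool" where
  "is_string_word Q1 s t R w \<longleftrightarrow> fst ` set w \<subseteq> Q1 \<and>
     (\<forall>i. Suc i < length w \<longrightarrow>
        ltgt s t (w ! i) = lsrc s t (w ! Suc i) \<and>
        w ! Suc i \<noteq> linv (w ! i) \<and>
        \<not> lrel R (w ! i) (w ! Suc i))"

definition is_band ::
  "'a set \<Rightarrow> ('a \<Rightarrow> 'v) \<Rightarrow> ('a \<Rightarrow> 'v) \<Rightarrow> ('a \<times> 'a) set \<Rightarrow> ('a \<times> bool) list \<Rightarrow> bool" where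
  "is_band Q1 s t R B \<longleftrightarrow> B \<noteq> [] \<and> ltgt s t (last B) = lsrc s t (hd B) \<and>
     (\<forall>n\<ge>1. is_string_word Q1 s t R (concat (replicate n B)))"

text \<open>A based representation: for each vertex x a finite index set V x (a basis of the
space at x) and for each arrow a a matrix M a with rows indexed by V (t a) and columns by
V (s a).\<close>

definition rep_iso ::
  "'v set \<Rightarrow> 'a set \<Rightarrow> ('a \<Rightarrow> 'v) \<Rightarrow> ('a \<Rightarrow> 'v) \<Rightarrow>
   ('v \<Rightarrow> 'i set) \<Rightarrow> ('a \<Rightarrow> 'i \<Rightarrow> 'i \<Rightarrow> 'k::field) \<Rightarrow>
   ('v \<Rightarrow> 'j set) \<Rightarrow> ('a \<Rightarrow> 'j \<Rightarrow> 'j \<Rightarrow> 'k) \<Rightarrow> bool" where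
  "rep_iso Q0 Q1 s t V M V' M' \<longleftrightarrow>
    (\<exists>(f :: 'v \<Rightarrow> 'j \<Rightarrow> 'i \<Rightarrow> 'k) (g :: 'v \<Rightarrow> 'i \<Rightarrow> 'j \<Rightarrow> 'k).
       (\<forall>x\<in>Q0. (\<forall>r\<in>V x. \<forall>c\<in>V x. (\<Sum>k\<in>V' x. g x r k * f x k c) = (if r = c then 1 else 0)) \<and>
                (\<forall>r\<in>V' x. \<forall>c\<in>V' x. (\<Sum>k\<in>V x. f x r k * g x k c) = (if r = c then 1 else 0))) \<and>
       (\<forall>a\<in>Q1. \<forall>r\<in>V' (t a). \<forall>c\<in>V (s a).
          (\<Sum>k\<in>V' (s a). M' a r k * f (s a) k c) = (\<Sum>k\<in>V (t a). f (t a) r k * M a k c)))"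

text \<open>Points of mod(A,d): families of matrices X a of size d(t a) x d(s a) (entries outside
this range and for non-arrows are 0), satisfying the relations: X b * X a = 0 for (a,b) in R.\<close>
definition modvar ::
  "'a set \<Rightarrow> ('a \<Rightarrow> 'v) \<Rightarrow> ('a \<Rightarrow> 'v) \<Rightarrow> ('a \<times> 'a) set \<Rightarrow> ('v \<Rightarrow> nat) \<Rightarrow>
   ('a \<Rightarrow> nat \<Rightarrow> nat \<Rightarrow> 'k::field) set" where
  "modvar Q1 s t R d = {X.
     (\<forall>a j i. (a \<notin> Q1 \<or> d (t a) \<le> j \<or> d (s a) \<le> i) \<longrightarrow> X a j i = 0) \<and>
     (\<forall>(a, b)\<in>R. \<forall>r < d (t b). \<forall>c < d (s a). (\<Sum>k < d (t a). X b r k * X a k c) = 0)}"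

inductive_set zpoly :: "(('a \<Rightarrow> nat \<Rightarrow> nat \<Rightarrow> 'k::field) \<Rightarrow> 'k) set" where
  zconst: "(\<lambda>X. c) \<in> zpoly"
| zcoord: "(\<lambda>X. X a j i) \<in> zpoly"
| zadd: "f \<in> zpoly \<Longrightarrow> g \<in> zpoly \<Longrightarrow> (\<lambda>X. f X + g X) \<in> zpoly"
| zmult: "f \<in> zpoly \<Longrightarrow> g \<in> zpoly \<Longrightarrow> (\<lambda>X. f X * g X) \<in> zpoly"

definition zclosure ::
  "('a \<Rightarrow> nat \<Rightarrow> nat \<Rightarrow> 'k::field) set \<Rightarrow> ('a \<Rightarrow> nat \<Rightarrow> nat \<Rightarrow> 'k) set \<Rightarrow> ('a \<Rightarrow> nat \<Rightarrow> nat \<Rightarrow> 'k) set" where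
  "zclosure Y S = {x\<in>Y. \<forall>f\<in>zpoly. (\<forall>y\<in>S. f y = 0) \<longrightarrow> f x = 0}"

definition orbit ::
  "'v set \<Rightarrow> 'a set \<Rightarrow> ('a \<Rightarrow> 'v) \<Rightarrow> ('a \<Rightarrow> 'v) \<Rightarrow> ('a \<times> 'a) set \<Rightarrow> ('v \<Rightarrow> nat) \<Rightarrow>
   ('v \<Rightarrow> 'i set) \<Rightarrow> ('a \<Rightarrow> 'i \<Rightarrow> 'i \<Rightarrow> 'k::field) \<Rightarrow> ('a \<Rightarrow> nat \<Rightarrow> nat \<Rightarrow> 'k) set" where
  "orbit Q0 Q1 s t R d V M = {X \<in> modvar Q1 s t R d. rep_iso Q0 Q1 s t (\<lambda>x. {..<d x}) X V M}"

definition jordan :: "'k::field \<Rightarrow> nat \<Rightarrow> nat \<Rightarrow> 'k" where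
  "jordan lam r c = (if r = c then lam else if c = Suc r then 1 else 0)"

text \<open>M(B,lambda,q): basis vectors (p,k), p a position of B (vertex v_p = source of b_p),
k < q.  The letter at position 0 is the fixed letter acting by J(lambda,q).\<close>
definition bandV :: "('a \<Rightarrow> 'v) \<Rightarrow> ('a \<Rightarrow> 'v) \<Rightarrow> ('a \<times> bool) list \<Rightarrow> nat \<Rightarrow> 'v \<Rightarrow> (nat \<times> nat) set" where
  "bandV s t B q x = {(p, k). p < length B \<and> lsrc s t (B ! p) = x \<and> k < q}"

definition bandM :: "('a \<times> bool) list \<Rightarrow> 'k::field \<Rightarrow> 'a \<Rightarrow> nat \<times> nat \<Rightarrow> nat \<times> nat \<Rightarrow> 'k" where
  "bandM B lam a rk cl = (case rk of (r, k') \<Rightarrow> case cl of (c, k) \<Rightarrow>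
     (\<Sum>p < length B.
        let e = (if p = 0 then jordan lam k' k else (if k' = k then 1 else 0)) in
        (if B ! p = (a, True) \<and> c = p \<and> r = Suc p mod length B then e else 0) +
        (if B ! p = (a, False) \<and> c = Suc p mod length B \<and> r = p then e else 0)))"

definition bsumV :: "('a \<Rightarrow> 'v) \<Rightarrow> ('a \<Rightarrow> 'v) \<Rightarrow> ('a \<times> bool) list \<Rightarrow> nat list \<Rightarrow> 'v \<Rightarrow> (nat \<times> nat \<times> nat) set" where
  "bsumV s t B qs x = {(j, b). j < length qs \<and> b \<in> bandV s t B (qs ! j) x}"

definition bsumM :: "('a \<times> bool) list \<Rightarrow> 'k::field list \<Rightarrow> 'a \<Rightarrow> nat \<times> nat \<times> nat \<Rightarrow> nat \<times> nat \<times> nat \<Rightarrow> 'k" where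
  "bsumM B ls a rb cb = (case rb of (j', b') \<Rightarrow> case cb of (j, b) \<Rightarrow>
     (if j' = j then bandM B (ls ! j) a b' b else 0))"

definition band_dim :: "('a \<Rightarrow> 'v) \<Rightarrow> ('a \<Rightarrow> 'v) \<Rightarrow> ('a \<times> bool) list \<Rightarrow> 'v \<Rightarrow> nat" where
  "band_dim s t B x = card {p. p < length B \<and> lsrc s t (B ! p) = x}"

text \<open>The family O_{B^{x q}}: union of the orbits of all
M(B,lambda_1,q_1) + ... + M(B,lambda_r,q_r) with (q_j) a partition of q, lambda_j nonzero.\<close>
definition band_family ::
  "'v set \<Rightarrow> 'a set \<Rightarrow> ('a \<Rightarrow> 'v) \<Rightarrow> ('a \<Rightarrow> 'v) \<Rightarrow> ('a \<times> 'a) set \<Rightarrow> ('a \<times> bool) list \<Rightarrow> nat \<Rightarrow>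
   ('a \<Rightarrow> nat \<Rightarrow> nat \<Rightarrow> 'k::field) set" where
  "band_family Q0 Q1 s t R B q =
     (\<Union>{orbit Q0 Q1 s t R (\<lambda>x. q * band_dim s t B x) (bsumV s t B qs) (bsumM B ls) |
          qs ls. (\<forall>j\<in>set qs. j \<ge> 1) \<and> sum_list qs = q \<and> length ls = length qs \<and> (0::'k) \<notin> set ls})"

end

theory Submission
  imports Defs
begin

(* Let X be isomorphic to M(B,lambda_1,q_1) + ... + M(B,lambda_r,q_r).  All these modules are one
   band representation on (positions of B) x (multiplicity space), in which the distinguished
   letter acts by the block diagonal matrix of the Jordan blocks J(lambda_j,q_j) and all other
   letters by identities; transporting along an isomorphism writes X = g N f.  Replacing
   J(lambda_j,q_j) by the bidiagonal matrix with diagonal lambda_j + tau c_0, ..., with c injective,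
   gives a curve tau |-> g N_tau f that is polynomial in tau, passes through X at tau = 0 and stays
   in mod(A,d), because a relation of A only ever meets two consecutive letters of the band.
   For all but finitely many tau the diagonal entries are nonzero and pairwise distinct, so
   the bidiagonal blocks are diagonalisable and g N_tau f is isomorphic to a direct sum of q band
   modules M(B,mu,1).  A polynomial vanishing on that family vanishes on infinitely many points
   of the curve, hence on the whole curve, in particular at X. *)

lemma alg_closed_field_infinite: "infinite (UNIV :: 'k::alg_closed_field set)"
proof
  assume fin: "finite (UNIV :: 'k set)"
  define p :: "'k poly" where "p = (\<Prod>a\<in>UNIV. [:-a, 1:])"
  have "degree p = card (UNIV :: 'k set)"
    unfolding p_def by (subst degree_prod_eq_sum_degree) auto
  moreover have "card (UNIV :: 'k set) > 0"
    using fin by (simp add: finite_UNIV_card_ge_0)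
  ultimately have "degree (p + 1) > 0"
    by (subst degree_add_eq_left) auto
  then obtain x where "poly (p + 1) x = 0"
    using alg_closed_imp_poly_has_root by blast
  moreover have "poly p x = 0"
    unfolding p_def poly_prod using fin by (simp add: prod_zero_iff)
  ultimately show False by simp
qed

subsection \<open>Polynomial curves and the Zariski closure\<close>

definition is_polyfun :: "('k::comm_semiring_1 \<Rightarrow> 'k) \<Rightarrow> bool" where
  "is_polyfun F \<longleftrightarrow> (\<exists>p. \<forall>x. F x = poly p x)"

lemma is_polyfun_const: "is_polyfun (\<lambda>x. c)"
  unfolding is_polyfun_def by (rule exI[of _ "[:c:]"]) simp

lemma is_polyfun_ident: "is_polyfun (\<lambda>x. x)"
  unfolding is_polyfun_def by (rule exI[of _ "[:0, 1:]"]) simp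

lemma is_polyfun_add: "is_polyfun F \<Longrightarrow> is_polyfun G \<Longrightarrow> is_polyfun (\<lambda>x. F x + G x)"
  unfolding is_polyfun_def by (metis poly_add)

lemma is_polyfun_mult:
  "is_polyfun F \<Longrightarrow> is_polyfun G \<Longrightarrow> is_polyfun (\<lambda>x. F x * G x)"
  unfolding is_polyfun_def by (metis poly_mult)

lemma is_polyfun_sum:
  "(\<And>i. i \<in> S \<Longrightarrow> is_polyfun (F i)) \<Longrightarrow> is_polyfun (\<lambda>x. \<Sum>i\<in>S. F i x)"
  by (induction S rule: infinite_finite_induct) (auto intro: is_polyfun_const is_polyfun_add)

lemma is_polyfun_if: "is_polyfun F \<Longrightarrow> is_polyfun G \<Longrightarrow> is_polyfun (\<lambda>x. if b then F x else G x)"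
  by (cases b) auto

lemma is_polyfun_zpoly:
  assumes "h \<in> zpoly" and "\<And>a j i. is_polyfun (\<lambda>\<tau>. Y \<tau> a j i)"
  shows "is_polyfun (\<lambda>\<tau>. h (Y \<tau>))"
  using assms by (induction rule: zpoly.induct) (auto intro: is_polyfun_const is_polyfun_add is_polyfun_mult)

lemma is_polyfun_eq_0_if_infinite_roots:
  fixes F :: "'k::idom \<Rightarrow> 'k"
  assumes "is_polyfun F" and "infinite {x. F x = 0}"
  shows "F y = 0"
proof -
  obtain p where p: "\<And>x. F x = poly p x"
    using assms(1) unfolding is_polyfun_def by blast
  have "p = 0"
    using assms(2) poly_roots_finite[of p] unfolding p by auto
  thus ?thesis using p by simp
qed

lemma zclosure_mono: "S \<subseteq> T \<Longrightarrow> zclosure Y S \<subseteq> zclosure Y T"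
  unfolding zclosure_def by blast

lemma zclosure_subset_zclosure: "S \<subseteq> zclosure Y T \<Longrightarrow> zclosure Y S \<subseteq> zclosure Y T"
  unfolding zclosure_def by blast

lemma polyfun_curve_in_zclosure:
  fixes X :: "'k::field \<Rightarrow> 'a \<Rightarrow> nat \<Rightarrow> nat \<Rightarrow> 'k"
  assumes "infinite (UNIV :: 'k set)"
    and "\<And>a j i. is_polyfun (\<lambda>\<tau>. X \<tau> a j i)"
    and "finite {\<tau>. X \<tau> \<notin> S}"
    and "X \<tau>\<^sub>0 \<in> Y"
  shows "X \<tau>\<^sub>0 \<in> zclosure Y S"
  unfolding zclosure_def
proof (intro CollectI conjI ballI impI)
  fix h assume h: "h \<in> zpoly" and vanish: "\<forall>y\<in>S. h y = 0"
  have "UNIV - {\<tau>. X \<tau> \<notin> S} \<subseteq> {\<tau>. h (X \<tau>) = 0}"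
    using vanish by blast
  moreover have "infinite (UNIV - {\<tau>. X \<tau> \<notin> S})"
    using assms(1,3) by (rule Diff_infinite_finite[rotated])
  ultimately have "infinite {\<tau>. h (X \<tau>) = 0}"
    using infinite_super by blast
  with is_polyfun_zpoly[OF h assms(2)] show "h (X \<tau>\<^sub>0) = 0"
    by (rule is_polyfun_eq_0_if_infinite_roots)
qed (fact assms(4))

subsection \<open>Matrices indexed by finite sets and isomorphisms\<close>

definition matmul :: "'j set \<Rightarrow> ('i \<Rightarrow> 'j \<Rightarrow> 'k::comm_semiring_1) \<Rightarrow> ('j \<Rightarrow> 'l \<Rightarrow> 'k) \<Rightarrow> 'i \<Rightarrow> 'l \<Rightarrow> 'k" where
  "matmul S A C r c = (\<Sum>k\<in>S. A r k * C k c)"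

definition id_mat :: "'i \<Rightarrow> 'i \<Rightarrow> 'k::comm_semiring_1" where
  "id_mat r c = (if r = c then 1 else 0)"

definition diag_mat :: "('i \<Rightarrow> 'k::comm_semiring_1) \<Rightarrow> 'i \<Rightarrow> 'i \<Rightarrow> 'k" where
  "diag_mat \<mu> r c = (if r = c then \<mu> r else 0)"

lemma matmul_assoc: "matmul T (matmul S A C) D = matmul S A (matmul T C D)"
  unfolding matmul_def
  by (intro ext) (simp add: sum_distrib_left sum_distrib_right mult.assoc sum.swap[of _ T])

lemma matmul_cong:
  "(\<And>k. k \<in> S \<Longrightarrow> A r k = A' r k) \<Longrightarrow> (\<And>k. k \<in> S \<Longrightarrow> C k c = C' k c) \<Longrightarrow>
    matmul S A C r c = matmul S A' C' r c"
  unfolding matmul_def by (rule sum.cong) auto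

lemma matmul_id_right: "finite S \<Longrightarrow> c \<in> S \<Longrightarrow> matmul S A id_mat r c = A r c"
  unfolding matmul_def id_mat_def by (simp add: if_distrib cong: if_cong)

lemma matmul_id_left: "finite S \<Longrightarrow> r \<in> S \<Longrightarrow> matmul S id_mat C r c = C r c"
  unfolding matmul_def id_mat_def by (simp add: if_distrib[of "\<lambda>x. x * _"] cong: if_cong)

lemma matmul_diag_left: "finite S \<Longrightarrow> r \<in> S \<Longrightarrow> matmul S (diag_mat \<mu>) C r c = \<mu> r * C r c"
  unfolding matmul_def diag_mat_def by (simp add: if_distrib[of "\<lambda>x. x * _"] cong: if_cong)

lemma matmul_inverse_cancel:
  assumes "finite S" and "\<And>k k'. k \<in> S \<Longrightarrow> k' \<in> S \<Longrightarrow> matmul T F G k k' = id_mat k k'"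
    and "k \<in> S"
  shows "matmul T F (matmul S G N) k c = N k c"
proof -
  have "matmul T F (matmul S G N) k c = matmul S (matmul T F G) N k c"
    by (simp add: matmul_assoc)
  also have "\<dots> = matmul S id_mat N k c"
    by (rule matmul_cong) (use assms(2,3) in auto)
  also have "\<dots> = N k c"
    using assms(1,3) by (rule matmul_id_left)
  finally show ?thesis .
qed

lemma is_polyfun_matmul:
  "(\<And>k. k \<in> S \<Longrightarrow> is_polyfun (\<lambda>\<tau>. A \<tau> r k)) \<Longrightarrow> (\<And>k. k \<in> S \<Longrightarrow> is_polyfun (\<lambda>\<tau>. C \<tau> k c)) \<Longrightarrow>
    is_polyfun (\<lambda>\<tau>. matmul S (A \<tau>) (C \<tau>) r c)"
  unfolding matmul_def by (intro is_polyfun_sum is_polyfun_mult) auto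

definition mutually_inverse ::
  "'v set \<Rightarrow> ('v \<Rightarrow> 'i set) \<Rightarrow> ('v \<Rightarrow> 'j set) \<Rightarrow> ('v \<Rightarrow> 'j \<Rightarrow> 'i \<Rightarrow> 'k::comm_semiring_1) \<Rightarrow>
    ('v \<Rightarrow> 'i \<Rightarrow> 'j \<Rightarrow> 'k) \<Rightarrow> bool" where
  "mutually_inverse Q0 V V' f g \<longleftrightarrow> (\<forall>x\<in>Q0.
     (\<forall>r\<in>V x. \<forall>c\<in>V x. matmul (V' x) (g x) (f x) r c = id_mat r c) \<and>
     (\<forall>r\<in>V' x. \<forall>c\<in>V' x. matmul (V x) (f x) (g x) r c = id_mat r c))"

lemma rep_iso_iff:
  "rep_iso Q0 Q1 s t V M V' M' \<longleftrightarrow> (\<exists>f g. mutually_inverse Q0 V V' f g \<and>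
     (\<forall>a\<in>Q1. \<forall>r\<in>V' (t a). \<forall>c\<in>V (s a).
        matmul (V' (s a)) (M' a) (f (s a)) r c = matmul (V (t a)) (f (t a)) (M a) r c))"
  unfolding rep_iso_def mutually_inverse_def matmul_def id_mat_def by simp

lemma mutually_inverse_comp:
  assumes fin: "\<And>x. finite (V' x)"
    and inv1: "mutually_inverse Q0 V V' f1 g1" and inv2: "mutually_inverse Q0 V' V'' f2 g2"
  shows "mutually_inverse Q0 V V'' (\<lambda>x. matmul (V' x) (f2 x) (f1 x)) (\<lambda>x. matmul (V' x) (g1 x) (g2 x))"
  unfolding mutually_inverse_def
proof (intro ballI conjI)
  fix x r c assume x: "x \<in> Q0" and r: "r \<in> V x" and c: "c \<in> V x"
  have "matmul (V'' x) (matmul (V' x) (g1 x) (g2 x)) (matmul (V' x) (f2 x) (f1 x)) r c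
      = matmul (V' x) (g1 x) (matmul (V'' x) (g2 x) (matmul (V' x) (f2 x) (f1 x))) r c"
    by (simp add: matmul_assoc)
  also have "\<dots> = matmul (V' x) (g1 x) (f1 x) r c"
  proof (rule matmul_cong)
    fix k assume "k \<in> V' x"
    then show "matmul (V'' x) (g2 x) (matmul (V' x) (f2 x) (f1 x)) k c = f1 x k c"
      by (rule matmul_inverse_cancel[OF fin, rotated]) (use inv2 x in \<open>auto simp: mutually_inverse_def\<close>)
  qed simp
  also have "\<dots> = id_mat r c"
    using inv1 x r c by (auto simp: mutually_inverse_def)
  finally show "matmul (V'' x) (matmul (V' x) (g1 x) (g2 x)) (matmul (V' x) (f2 x) (f1 x)) r c = id_mat r c" .
next
  fix x r c assume x: "x \<in> Q0" and r: "r \<in> V'' x" and c: "c \<in> V'' x"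
  have "matmul (V x) (matmul (V' x) (f2 x) (f1 x)) (matmul (V' x) (g1 x) (g2 x)) r c
      = matmul (V' x) (f2 x) (matmul (V x) (f1 x) (matmul (V' x) (g1 x) (g2 x))) r c"
    by (simp add: matmul_assoc)
  also have "\<dots> = matmul (V' x) (f2 x) (g2 x) r c"
  proof (rule matmul_cong)
    fix k assume "k \<in> V' x"
    then show "matmul (V x) (f1 x) (matmul (V' x) (g1 x) (g2 x)) k c = g2 x k c"
      by (rule matmul_inverse_cancel[OF fin, rotated]) (use inv1 x in \<open>auto simp: mutually_inverse_def\<close>)
  qed simp
  also have "\<dots> = id_mat r c"
    using inv2 x r c by (auto simp: mutually_inverse_def)
  finally show "matmul (V x) (matmul (V' x) (f2 x) (f1 x)) (matmul (V' x) (g1 x) (g2 x)) r c = id_mat r c" .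
qed

lemma rep_iso_trans:
  assumes fin: "\<And>x. finite (V' x)"
    and "rep_iso Q0 Q1 s t V M V' M'" and "rep_iso Q0 Q1 s t V' M' V'' M''"
  shows "rep_iso Q0 Q1 s t V M V'' M''"
proof -
  obtain f1 g1 where inv1: "mutually_inverse Q0 V V' f1 g1"
    and int1: "\<forall>a\<in>Q1. \<forall>r\<in>V' (t a). \<forall>c\<in>V (s a).
      matmul (V' (s a)) (M' a) (f1 (s a)) r c = matmul (V (t a)) (f1 (t a)) (M a) r c"
    using assms(2) unfolding rep_iso_iff by blast
  obtain f2 g2 where inv2: "mutually_inverse Q0 V' V'' f2 g2"
    and int2: "\<forall>a\<in>Q1. \<forall>r\<in>V'' (t a). \<forall>c\<in>V' (s a).
      matmul (V'' (s a)) (M'' a) (f2 (s a)) r c = matmul (V' (t a)) (f2 (t a)) (M' a) r c"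
    using assms(3) unfolding rep_iso_iff by blast
  define f where "f x = matmul (V' x) (f2 x) (f1 x)" for x
  show ?thesis unfolding rep_iso_iff
  proof (intro exI conjI ballI)
    show "mutually_inverse Q0 V V'' f (\<lambda>x. matmul (V' x) (g1 x) (g2 x))"
      unfolding f_def by (rule mutually_inverse_comp[OF fin inv1 inv2])
  next
    fix a r c assume a: "a \<in> Q1" and r: "r \<in> V'' (t a)" and c: "c \<in> V (s a)"
    have "matmul (V'' (s a)) (M'' a) (f (s a)) r c
        = matmul (V' (s a)) (matmul (V'' (s a)) (M'' a) (f2 (s a))) (f1 (s a)) r c"
      unfolding f_def matmul_assoc ..
    also have "\<dots> = matmul (V' (s a)) (matmul (V' (t a)) (f2 (t a)) (M' a)) (f1 (s a)) r c"
      by (rule matmul_cong) (use int2 a r in auto)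
    also have "\<dots> = matmul (V' (t a)) (f2 (t a)) (matmul (V' (s a)) (M' a) (f1 (s a))) r c"
      by (simp add: matmul_assoc)
    also have "\<dots> = matmul (V' (t a)) (f2 (t a)) (matmul (V (t a)) (f1 (t a)) (M a)) r c"
      by (rule matmul_cong) (use int1 a c in auto)
    also have "\<dots> = matmul (V (t a)) (f (t a)) (M a) r c"
      unfolding f_def matmul_assoc ..
    finally show "matmul (V'' (s a)) (M'' a) (f (s a)) r c = matmul (V (t a)) (f (t a)) (M a) r c" .
  qed
qed

lemma rep_iso_reindex:
  fixes \<phi> :: "'j \<Rightarrow> 'i" and M :: "'a \<Rightarrow> 'i \<Rightarrow> 'i \<Rightarrow> 'k::field"
    and V :: "'v \<Rightarrow> 'i set"
  assumes bij: "\<And>x. bij_betw \<phi> (V' x) (V x)" and fin: "\<And>x. finite (V' x)"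
    and eq: "\<And>a r c. a \<in> Q1 \<Longrightarrow> r \<in> V' (t a) \<Longrightarrow> c \<in> V' (s a) \<Longrightarrow> M' a r c = M a (\<phi> r) (\<phi> c)"
  shows "rep_iso Q0 Q1 s t V M V' M'"
proof -
  define f :: "'v \<Rightarrow> 'j \<Rightarrow> 'i \<Rightarrow> 'k" where "f x r c = (if \<phi> r = c then 1 else 0)" for x r c
  define g :: "'v \<Rightarrow> 'i \<Rightarrow> 'j \<Rightarrow> 'k" where "g x r c = (if \<phi> c = r then 1 else 0)" for x r c
  have finV: "finite (V x)" for x
    using bij[of x] fin[of x] bij_betw_finite by blast
  have inj: "inj_on \<phi> (V' x)" and surj: "\<phi> ` V' x = V x" for x
    using bij[of x] by (auto simp: bij_betw_def)
  show ?thesis unfolding rep_iso_iff mutually_inverse_def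
  proof (intro exI[of _ f] exI[of _ g] conjI ballI)
    fix x r c assume r: "r \<in> V x" and c: "c \<in> V x"
    obtain k where k: "k \<in> V' x" "\<phi> k = r"
      using r unfolding surj[of x, symmetric] by blast
    have "matmul (V' x) (g x) (f x) r c = (\<Sum>k'\<in>V' x. if k' = k then id_mat r c else 0)"
      unfolding matmul_def f_def g_def id_mat_def
      by (rule sum.cong) (use inj[of x] k in \<open>auto simp: inj_on_def\<close>)
    also have "\<dots> = id_mat r c"
      using fin[of x] k by simp
    finally show "matmul (V' x) (g x) (f x) r c = id_mat r c" .
  next
    fix x r c assume r: "r \<in> V' x" and c: "c \<in> V' x"
    have "matmul (V x) (f x) (g x) r c = (\<Sum>k\<in>V x. if k = \<phi> r then id_mat (\<phi> r) (\<phi> c) else 0)"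
      unfolding matmul_def f_def g_def id_mat_def by (rule sum.cong) auto
    also have "\<dots> = id_mat r c"
      using finV[of x] r c inj[of x] surj[of x] by (auto simp: id_mat_def inj_on_def)
    finally show "matmul (V x) (f x) (g x) r c = id_mat r c" .
  next
    fix a r c assume a: "a \<in> Q1" and r: "r \<in> V' (t a)" and c: "c \<in> V (s a)"
    obtain k where k: "k \<in> V' (s a)" "\<phi> k = c"
      using c unfolding surj[of "s a", symmetric] by blast
    have "matmul (V' (s a)) (M' a) (f (s a)) r c = (\<Sum>k'\<in>V' (s a). if k' = k then M' a r k else 0)"
      unfolding matmul_def f_def
      by (rule sum.cong) (use inj[of "s a"] k in \<open>auto simp: inj_on_def\<close>)
    also have "\<dots> = M a (\<phi> r) c"
      using fin eq a r k by auto
    also have "\<dots> = (\<Sum>k\<in>V (t a). if k = \<phi> r then M a k c else 0)"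
      using finV[of "t a"] surj[of "t a"] r by auto
    also have "\<dots> = matmul (V (t a)) (f (t a)) (M a) r c"
      unfolding matmul_def f_def by (rule sum.cong) auto
    finally show "matmul (V' (s a)) (M' a) (f (s a)) r c = matmul (V (t a)) (f (t a)) (M a) r c" .
  qed
qed

subsection \<open>Transport of structure\<close>

text \<open>\<open>f x\<close> maps \<open>K\<^bsup>d x\<^esup>\<close> to the space with basis \<open>W x\<close> and \<open>g x\<close> is its inverse, so
  \<open>transport N\<close> is the point of \<open>mod(A,d)\<close> corresponding to \<open>N\<close> under this change of basis.\<close>
locale transport_of_structure =
  fixes Q0 :: "'v set" and Q1 :: "'a set" and s t :: "'a \<Rightarrow> 'v" and d :: "'v \<Rightarrow> nat"
    and W :: "'v \<Rightarrow> 'i set" and f :: "'v \<Rightarrow> 'i \<Rightarrow> nat \<Rightarrow> 'k::field" and g :: "'v \<Rightarrow> nat \<Rightarrow> 'i \<Rightarrow> 'k"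
  assumes finite_W: "\<And>x. finite (W x)"
    and inverse: "mutually_inverse Q0 (\<lambda>x. {..<d x}) W f g"
    and targets: "t ` Q1 \<subseteq> Q0"
begin

definition transport :: "('a \<Rightarrow> 'i \<Rightarrow> 'i \<Rightarrow> 'k) \<Rightarrow> 'a \<Rightarrow> nat \<Rightarrow> nat \<Rightarrow> 'k" where
  "transport N a r c = (if a \<in> Q1 \<and> r < d (t a) \<and> c < d (s a)
     then matmul (W (t a)) (g (t a)) (matmul (W (s a)) (N a) (f (s a))) r c else 0)"

lemma f_g_cancel: "a \<in> Q1 \<Longrightarrow> k \<in> W (t a) \<Longrightarrow> matmul {..<d (t a)} (f (t a)) (matmul (W (t a)) (g (t a)) N) k c = N k c"
  by (rule matmul_inverse_cancel[OF finite_W])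
    (use inverse targets in \<open>auto simp: mutually_inverse_def\<close>)

lemma rep_iso_transport: "rep_iso Q0 Q1 s t (\<lambda>x. {..<d x}) (transport N) W N"
  unfolding rep_iso_iff
proof (intro exI conjI ballI)
  show "mutually_inverse Q0 (\<lambda>x. {..<d x}) W f g"
    by (fact inverse)
next
  fix a r c assume a: "a \<in> Q1" and r: "r \<in> W (t a)" and c: "c \<in> {..<d (s a)}"
  have "matmul {..<d (t a)} (f (t a)) (transport N a) r c
      = matmul {..<d (t a)} (f (t a)) (matmul (W (t a)) (g (t a)) (matmul (W (s a)) (N a) (f (s a)))) r c"
    by (rule matmul_cong) (use a c in \<open>auto simp: transport_def\<close>)
  also have "\<dots> = matmul (W (s a)) (N a) (f (s a)) r c"
    using a r by (rule f_g_cancel)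
  finally show "matmul (W (s a)) (N a) (f (s a)) r c = matmul {..<d (t a)} (f (t a)) (transport N a) r c"
    by simp
qed

lemma transport_in_modvar:
  assumes composable: "R \<subseteq> {(a, b). a \<in> Q1 \<and> b \<in> Q1 \<and> t a = s b}"
    and relations: "\<And>a b k k'. (a, b) \<in> R \<Longrightarrow> matmul (W (t a)) (N b) (N a) k k' = 0"
  shows "transport N \<in> modvar Q1 s t R d"
  unfolding modvar_def
proof (intro CollectI conjI allI impI ballI)
  fix a j i assume "a \<notin> Q1 \<or> d (t a) \<le> j \<or> d (s a) \<le> i"
  thus "transport N a j i = 0"
    unfolding transport_def by auto
next
  fix ab assume ab: "ab \<in> R"
  obtain a b where ab_eq: "ab = (a, b)" by (cases ab)
  have a: "a \<in> Q1" and b: "b \<in> Q1" and ta_sb: "t a = s b"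
    using composable ab ab_eq by auto
  show "case ab of (a, b) \<Rightarrow> \<forall>r<d (t b). \<forall>c<d (s a). (\<Sum>k<d (t a). transport N b r k * transport N a k c) = 0"
    unfolding ab_eq prod.case
  proof (intro allI impI)
    fix r c assume r: "r < d (t b)" and c: "c < d (s a)"
    have "(\<Sum>k<d (t a). transport N b r k * transport N a k c)
        = matmul {..<d (t a)} (matmul (W (t b)) (g (t b)) (matmul (W (s b)) (N b) (f (s b))))
            (matmul (W (t a)) (g (t a)) (matmul (W (s a)) (N a) (f (s a)))) r c"
      unfolding matmul_def[of "{..<d (t a)}"]
      by (rule sum.cong) (use a b r c ta_sb in \<open>auto simp: transport_def\<close>)
    also have "\<dots> = matmul (W (t b)) (g (t b)) (matmul (W (t a)) (N b)
        (matmul {..<d (t a)} (f (t a)) (matmul (W (t a)) (g (t a)) (matmul (W (s a)) (N a) (f (s a)))))) r c"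
      by (simp add: matmul_assoc flip: ta_sb)
    also have "\<dots> = matmul (W (t b)) (g (t b)) (matmul (W (t a)) (N b) (matmul (W (s a)) (N a) (f (s a)))) r c"
      by (intro matmul_cong refl) (simp add: f_g_cancel a)
    also have "\<dots> = matmul (W (t b)) (g (t b)) (matmul (W (s a)) (matmul (W (t a)) (N b) (N a)) (f (s a))) r c"
      by (simp add: matmul_assoc)
    also have "\<dots> = 0"
      using relations[OF ab[unfolded ab_eq]] unfolding matmul_def by simp
    finally show "(\<Sum>k<d (t a). transport N b r k * transport N a k c) = 0" .
  qed
qed

lemma transport_eq:
  assumes "X \<in> modvar Q1 s t R d"
    and intertwines: "\<And>a r c. a \<in> Q1 \<Longrightarrow> r \<in> W (t a) \<Longrightarrow> c < d (s a) \<Longrightarrow>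
      matmul (W (s a)) (N a) (f (s a)) r c = matmul {..<d (t a)} (f (t a)) (X a) r c"
  shows "transport N = X"
proof (intro ext)
  fix a r c
  show "transport N a r c = X a r c"
  proof (cases "a \<in> Q1 \<and> r < d (t a) \<and> c < d (s a)")
    case True
    hence a: "a \<in> Q1" and r: "r < d (t a)" and c: "c < d (s a)" by auto
    have "transport N a r c = matmul (W (t a)) (g (t a)) (matmul (W (s a)) (N a) (f (s a))) r c"
      using True by (simp add: transport_def)
    also have "\<dots> = matmul (W (t a)) (g (t a)) (matmul {..<d (t a)} (f (t a)) (X a)) r c"
      by (rule matmul_cong) (auto simp: intertwines a c)
    also have "\<dots> = X a r c"
      by (rule matmul_inverse_cancel) (use inverse targets a r in \<open>auto simp: mutually_inverse_def\<close>)
    finally show ?thesis .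
  next
    case False
    thus ?thesis using assms(1) unfolding transport_def modvar_def by auto
  qed
qed

lemma is_polyfun_transport:
  "(\<And>a k k'. is_polyfun (\<lambda>\<tau>. N \<tau> a k k')) \<Longrightarrow> is_polyfun (\<lambda>\<tau>. transport (N \<tau>) a r c)"
  unfolding transport_def by (intro is_polyfun_if is_polyfun_const is_polyfun_matmul) auto

end

subsection \<open>Band representations with a matrix parameter\<close>

text \<open>\<open>band_rep B A\<close> lives on \<open>band_space s t B I\<close> (pairs of a position of \<open>B\<close> and an element
  of the multiplicity index set \<open>I\<close>); the letter at position \<open>0\<close> acts by the \<open>I \<times> I\<close>
  matrix \<open>A\<close>, all other letters by the identity.  Thus \<open>M(B,\<lambda>,q)\<close> is \<open>band_rep B (jordan \<lambda>)\<close>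
  with \<open>I = {..<q}\<close>.\<close>

definition band_positions :: "('a \<Rightarrow> 'v) \<Rightarrow> ('a \<Rightarrow> 'v) \<Rightarrow> ('a \<times> bool) list \<Rightarrow> 'v \<Rightarrow> nat set" where
  "band_positions s t B x = {p. p < length B \<and> lsrc s t (B ! p) = x}"

definition band_space :: "('a \<Rightarrow> 'v) \<Rightarrow> ('a \<Rightarrow> 'v) \<Rightarrow> ('a \<times> bool) list \<Rightarrow> 'c set \<Rightarrow> 'v \<Rightarrow> (nat \<times> 'c) set" where
  "band_space s t B I x = band_positions s t B x \<times> I"

definition letter_entry :: "('a \<times> bool) list \<Rightarrow> 'a \<Rightarrow> nat \<Rightarrow> nat \<Rightarrow> nat \<Rightarrow> bool" where
  "letter_entry B a p r c \<longleftrightarrow>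
     (B ! p = (a, True) \<and> c = p \<and> r = Suc p mod length B) \<or>
     (B ! p = (a, False) \<and> c = Suc p mod length B \<and> r = p)"

definition letter_action :: "('c \<Rightarrow> 'c \<Rightarrow> 'k::comm_semiring_1) \<Rightarrow> nat \<Rightarrow> 'c \<Rightarrow> 'c \<Rightarrow> 'k" where
  "letter_action A p = (if p = 0 then A else id_mat)"

definition band_rep ::
  "('a \<times> bool) list \<Rightarrow> ('c \<Rightarrow> 'c \<Rightarrow> 'k::comm_semiring_1) \<Rightarrow> 'a \<Rightarrow> nat \<times> 'c \<Rightarrow> nat \<times> 'c \<Rightarrow> 'k" where
  "band_rep B A a rk cl =
     (\<Sum>p<length B. of_bool (letter_entry B a p (fst rk) (fst cl)) * letter_action A p (snd rk) (snd cl))"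

lemma finite_band_space: "finite I \<Longrightarrow> finite (band_space s t B I x)"
  unfolding band_space_def band_positions_def by simp

lemma band_rep_nonzero:
  assumes "band_rep B A a rk cl \<noteq> 0"
  shows "\<exists>p<length B. letter_entry B a p (fst rk) (fst cl)"
proof (rule ccontr)
  assume "\<not> (\<exists>p<length B. letter_entry B a p (fst rk) (fst cl))"
  hence "band_rep B A a rk cl = (\<Sum>p<length B. 0)"
    unfolding band_rep_def by (intro sum.cong) auto
  with assms show False by simp
qed

lemma Suc_mod_eq_if: "p < m \<Longrightarrow> Suc p mod m = (if Suc p = m then 0 else Suc p)"
  by auto

lemma band_consecutive_not_lrel:
  assumes "is_band Q1 s t R B" and "p < length B"
  shows "\<not> lrel R (B ! p) (B ! (Suc p mod length B))"
proof -
  have "is_string_word Q1 s t R (concat (replicate 2 B))"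
    using assms(1) unfolding is_band_def by auto
  hence word: "is_string_word Q1 s t R (B @ B)"
    by (simp add: numeral_2_eq_2)
  have "\<not> lrel R ((B @ B) ! p) ((B @ B) ! Suc p)"
    using word assms(2) unfolding is_string_word_def by simp
  moreover have "(B @ B) ! p = B ! p" and "(B @ B) ! Suc p = B ! (Suc p mod length B)"
    using assms(2) by (auto simp: nth_append Suc_mod_eq_if)
  ultimately show ?thesis by simp
qed

text \<open>Two letters of \<open>B\<close> meeting at a position are consecutive, and consecutive letters of a
  band never form a relation; so every relation acts by zero.\<close>
lemma band_rep_relation:
  assumes band: "is_band Q1 s t R B" and ab: "(a, b) \<in> R"
  shows "band_rep B A b k1 k * band_rep B A' a k k2 = 0"
proof (rule ccontr)
  assume "band_rep B A b k1 k * band_rep B A' a k k2 \<noteq> 0"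
  then obtain p' p where p': "p' < length B" "letter_entry B b p' (fst k1) (fst k)"
    and p: "p < length B" "letter_entry B a p (fst k) (fst k2)"
    using band_rep_nonzero by (metis mult_not_zero)
  have no_rel: "\<not> lrel R (B ! p) (B ! (Suc p mod length B))" "\<not> lrel R (B ! p') (B ! (Suc p' mod length B))"
    using band_consecutive_not_lrel[OF band] p p' by auto
  have "Suc p mod length B = Suc p' mod length B \<Longrightarrow> p = p'"
    using p(1) p'(1) by (auto simp: Suc_mod_eq_if split: if_splits)
  thus False
    using p(2) p'(2) no_rel ab unfolding letter_entry_def by auto
qed

lemma sum_band_space_delta:
  assumes "finite I" and "c \<in> band_positions s t B x"
  shows "(\<Sum>pw\<in>band_space s t B I x. if fst pw = c then G (snd pw) else 0) = (\<Sum>w\<in>I. G w)"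
proof -
  have "(\<Sum>pw\<in>band_space s t B I x. if fst pw = c then G (snd pw) else 0)
      = (\<Sum>p\<in>band_positions s t B x. \<Sum>w\<in>I. if p = c then G w else 0)"
    unfolding band_space_def sum.cartesian_product by (rule sum.cong) auto
  also have "\<dots> = (\<Sum>p\<in>band_positions s t B x. if p = c then (\<Sum>w\<in>I. G w) else 0)"
    by (rule sum.cong) auto
  also have "\<dots> = (\<Sum>w\<in>I. G w)"
    using assms(2) by (simp add: band_positions_def)
  finally show ?thesis .
qed

definition id_tensor :: "('c \<Rightarrow> 'c \<Rightarrow> 'k::comm_semiring_1) \<Rightarrow> nat \<times> 'c \<Rightarrow> nat \<times> 'c \<Rightarrow> 'k" where
  "id_tensor F rk cl = (if fst rk = fst cl then F (snd rk) (snd cl) else 0)"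

lemma matmul_id_tensor_inverse:
  assumes finI: "finite I"
    and FG: "\<And>u' u. u' \<in> I \<Longrightarrow> u \<in> I \<Longrightarrow> matmul I F G u' u = id_mat u' u"
    and rk: "rk \<in> band_space s t B I x" and cl: "cl \<in> band_space s t B I x"
  shows "matmul (band_space s t B I x) (id_tensor F) (id_tensor G) rk cl = id_mat rk cl"
proof -
  have "matmul (band_space s t B I x) (id_tensor F) (id_tensor G) rk cl
      = (\<Sum>pw\<in>band_space s t B I x. if fst pw = fst rk then
          (if fst rk = fst cl then F (snd rk) (snd pw) * G (snd pw) (snd cl) else 0) else 0)"
    unfolding matmul_def id_tensor_def by (rule sum.cong) auto
  also have "\<dots> = (if fst rk = fst cl then matmul I F G (snd rk) (snd cl) else 0)"
    using rk by (subst sum_band_space_delta[OF finI]) (auto simp: band_space_def matmul_def)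
  also have "\<dots> = id_mat rk cl"
    using rk cl FG by (auto simp: band_space_def id_mat_def prod_eq_iff)
  finally show ?thesis .
qed

lemma rep_iso_band_rep_conj:
  fixes W V A D :: "'c \<Rightarrow> 'c \<Rightarrow> 'k::field" and s t :: "'a \<Rightarrow> 'v"
  assumes finI: "finite I"
    and WV: "\<And>u' u. u' \<in> I \<Longrightarrow> u \<in> I \<Longrightarrow> matmul I W V u' u = id_mat u' u"
    and VW: "\<And>u' u. u' \<in> I \<Longrightarrow> u \<in> I \<Longrightarrow> matmul I V W u' u = id_mat u' u"
    and WA: "\<And>u' u. u' \<in> I \<Longrightarrow> u \<in> I \<Longrightarrow> matmul I W A u' u = matmul I D W u' u"
  shows "rep_iso Q0 Q1 s t (band_space s t B I) (band_rep B A) (band_space s t B I) (band_rep B D)"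
proof -
  have action_WA: "matmul I (letter_action D p) W u' u = matmul I W (letter_action A p) u' u"
    if "u' \<in> I" "u \<in> I" for p u' u
    using that WA finI by (simp add: letter_action_def matmul_id_left matmul_id_right)
  show ?thesis unfolding rep_iso_iff mutually_inverse_def
  proof (rule exI[of _ "\<lambda>_. id_tensor W"], rule exI[of _ "\<lambda>_. id_tensor V"], intro conjI ballI)
    fix x rk cl assume "x \<in> Q0" "rk \<in> band_space s t B I x" "cl \<in> band_space s t B I x"
    then show "matmul (band_space s t B I x) (id_tensor V) (id_tensor W) rk cl = id_mat rk cl"
      by (intro matmul_id_tensor_inverse[OF finI] VW)
  next
    fix x rk cl assume "x \<in> Q0" "rk \<in> band_space s t B I x" "cl \<in> band_space s t B I x"
    then show "matmul (band_space s t B I x) (id_tensor W) (id_tensor V) rk cl = id_mat rk cl"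
      by (intro matmul_id_tensor_inverse[OF finI] WV)
  next
    fix a rk cl assume rk: "rk \<in> band_space s t B I (t a)" and cl: "cl \<in> band_space s t B I (s a)"
    obtain r u' c u where rk_eq: "rk = (r, u')" and cl_eq: "cl = (c, u)"
      by (cases rk, cases cl)
    have u': "u' \<in> I" and u: "u \<in> I" and r: "r \<in> band_positions s t B (t a)"
      and c: "c \<in> band_positions s t B (s a)"
      using rk cl unfolding rk_eq cl_eq band_space_def by auto
    have "matmul (band_space s t B I (s a)) (band_rep B D a) (id_tensor W) rk cl
        = (\<Sum>pw\<in>band_space s t B I (s a). if fst pw = c then band_rep B D a (r, u') (c, snd pw) * W (snd pw) u else 0)"
      unfolding matmul_def id_tensor_def rk_eq cl_eq by (rule sum.cong) auto
    also have "\<dots> = (\<Sum>w\<in>I. band_rep B D a (r, u') (c, w) * W w u)"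
      by (rule sum_band_space_delta[OF finI c])
    also have "\<dots> = (\<Sum>p<length B. of_bool (letter_entry B a p r c) * matmul I (letter_action D p) W u' u)"
      unfolding band_rep_def matmul_def
      by (simp add: sum_distrib_left sum_distrib_right mult.assoc sum.swap[of _ I]
        del: sum_mult_of_bool_eq sum_of_bool_mult_eq)
    also have "\<dots> = (\<Sum>p<length B. of_bool (letter_entry B a p r c) * matmul I W (letter_action A p) u' u)"
      using action_WA u u' by simp
    also have "\<dots> = (\<Sum>w\<in>I. W u' w * band_rep B A a (r, w) (c, u))"
      unfolding band_rep_def matmul_def
      by (simp add: sum_distrib_left sum_distrib_right mult.assoc mult.left_commute sum.swap[of _ I]
        del: sum_mult_of_bool_eq sum_of_bool_mult_eq)
    also have "\<dots> = (\<Sum>pw\<in>band_space s t B I (t a). if fst pw = r then W u' (snd pw) * band_rep B A a (r, snd pw) (c, u) else 0)"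
      by (rule sum_band_space_delta[OF finI r, symmetric])
    also have "\<dots> = matmul (band_space s t B I (t a)) (id_tensor W) (band_rep B A a) rk cl"
      unfolding matmul_def id_tensor_def rk_eq cl_eq by (rule sum.cong) auto
    finally show "matmul (band_space s t B I (s a)) (band_rep B D a) (id_tensor W) rk cl
        = matmul (band_space s t B I (t a)) (id_tensor W) (band_rep B A a) rk cl" .
  qed
qed

lemma is_polyfun_band_rep:
  assumes "\<And>u' u. is_polyfun (\<lambda>\<tau>. A \<tau> u' u)"
  shows "is_polyfun (\<lambda>\<tau>. band_rep B (A \<tau>) a rk cl)"
proof -
  have "is_polyfun (\<lambda>\<tau>. letter_action (A \<tau>) p u' u)" for p u' u
    using assms by (cases "p = 0") (auto simp: letter_action_def intro: is_polyfun_const)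
  thus ?thesis
    unfolding band_rep_def by (intro is_polyfun_sum is_polyfun_mult is_polyfun_const)
qed

subsection \<open>Diagonalising bidiagonal blocks\<close>

definition bidiag :: "(nat \<Rightarrow> 'k::field) \<Rightarrow> nat \<Rightarrow> nat \<Rightarrow> 'k" where
  "bidiag \<mu> r c = (if r = c then \<mu> c else if c = Suc r then 1 else 0)"

text \<open>For pairwise distinct \<open>\<mu>\<close>, the columns of \<open>right_eigvecs \<mu>\<close> are eigenvectors of
  \<open>bidiag \<mu>\<close> and the rows of \<open>left_eigvecs \<mu>\<close> are left eigenvectors; both matrices are upper
  triangular with unit diagonal.\<close>
definition right_eigvecs :: "(nat \<Rightarrow> 'k::field) \<Rightarrow> nat \<Rightarrow> nat \<Rightarrow> 'k" where
  "right_eigvecs \<mu> k i = (if k \<le> i then (\<Prod>l\<in>{k..<i}. 1 / (\<mu> i - \<mu> l)) else 0)"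

definition left_eigvecs :: "(nat \<Rightarrow> 'k::field) \<Rightarrow> nat \<Rightarrow> nat \<Rightarrow> 'k" where
  "left_eigvecs \<mu> i k = (if i \<le> k then (\<Prod>l\<in>{i<..k}. 1 / (\<mu> i - \<mu> l)) else 0)"

lemma matmul_bidiag_left:
  assumes "k < n"
  shows "matmul {..<n} (bidiag \<mu>) X k c = \<mu> k * X k c + (if Suc k < n then X (Suc k) c else 0)"
proof -
  have "matmul {..<n} (bidiag \<mu>) X k c
      = (\<Sum>l<n. (if l = k then \<mu> k * X l c else 0) + (if l = Suc k then X l c else 0))"
    unfolding matmul_def bidiag_def by (rule sum.cong) auto
  thus ?thesis using assms by (simp add: sum.distrib)
qed

lemma matmul_bidiag_right:
  assumes "k < n"
  shows "matmul {..<n} X (bidiag \<mu>) r k = X r k * \<mu> k + (if 0 < k then X r (k - 1) else 0)"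
proof -
  have "matmul {..<n} X (bidiag \<mu>) r k
      = (\<Sum>l<n. (if l = k then X r l * \<mu> k else 0) + (if 0 < k \<and> l = k - 1 then X r l else 0))"
    unfolding matmul_def bidiag_def by (rule sum.cong) auto
  thus ?thesis using assms by (simp add: sum.distrib)
qed

lemma unitriangular_cancel_right:
  fixes U :: "nat \<Rightarrow> nat \<Rightarrow> 'k::comm_ring_1"
  assumes upper: "\<And>l i. i < l \<Longrightarrow> U l i = 0" and diag: "\<And>i. U i i = 1"
    and zero: "\<And>i. i < n \<Longrightarrow> (\<Sum>l<n. E l * U l i) = 0"
  shows "l < n \<Longrightarrow> E l = 0"
proof (induction l rule: less_induct)
  case (less i)
  have "(\<Sum>l<n. E l * U l i) = (\<Sum>l<n. if l = i then E i else 0)"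
  proof (rule sum.cong)
    fix l assume "l \<in> {..<n}"
    show "E l * U l i = (if l = i then E i else 0)"
      using less upper diag by (cases l i rule: linorder_cases) auto
  qed simp
  thus ?case using zero[OF less.prems] less.prems by simp
qed

context
  fixes n :: nat and \<mu> :: "nat \<Rightarrow> 'k::field"
  assumes distinct: "inj_on \<mu> {..<n}"
begin

lemma bidiag_right_eigvecs:
  assumes "k < n" and "i < n"
  shows "matmul {..<n} (bidiag \<mu>) (right_eigvecs \<mu>) k i = \<mu> i * right_eigvecs \<mu> k i"
proof (cases "k < i")
  case True
  have "{k..<i} = insert k {Suc k..<i}" using True by auto
  moreover have "\<mu> i - \<mu> k \<noteq> 0"
    using distinct True assms by (auto dest: inj_onD)
  ultimately have "right_eigvecs \<mu> (Suc k) i = (\<mu> i - \<mu> k) * right_eigvecs \<mu> k i"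
    using True by (simp add: right_eigvecs_def)
  thus ?thesis using True assms by (simp add: matmul_bidiag_left algebra_simps)
next
  case False
  thus ?thesis using assms by (cases "k = i") (auto simp: matmul_bidiag_left right_eigvecs_def)
qed

lemma left_eigvecs_bidiag:
  assumes "i < n" and "k < n"
  shows "matmul {..<n} (left_eigvecs \<mu>) (bidiag \<mu>) i k = \<mu> i * left_eigvecs \<mu> i k"
proof (cases "i < k")
  case True
  have "{i<..k} = insert k {i<..k - 1}" using True by auto
  moreover have "\<mu> i - \<mu> k \<noteq> 0"
    using distinct True assms by (auto dest: inj_onD)
  ultimately have "left_eigvecs \<mu> i (k - 1) = (\<mu> i - \<mu> k) * left_eigvecs \<mu> i k"
    using True by (simp add: left_eigvecs_def)
  thus ?thesis using True assms by (simp add: matmul_bidiag_right algebra_simps)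
next
  case False
  thus ?thesis using assms by (cases "k = i") (auto simp: matmul_bidiag_right left_eigvecs_def)
qed

text \<open>Above the diagonal, evaluating \<open>left_eigvecs \<mu> \<cdot> bidiag \<mu> \<cdot> right_eigvecs \<mu>\<close> in two ways
  gives \<open>(\<mu> k - \<mu> i) S = 0\<close>: left and right eigenvectors for different eigenvalues are orthogonal.\<close>
lemma left_right_eigvecs_inverse:
  assumes "i < n" and "k < n"
  shows "matmul {..<n} (left_eigvecs \<mu>) (right_eigvecs \<mu>) i k = id_mat i k"
proof (cases i k rule: linorder_cases)
  case less
  define S where "S = matmul {..<n} (left_eigvecs \<mu>) (right_eigvecs \<mu>) i k"
  have "matmul {..<n} (left_eigvecs \<mu>) (matmul {..<n} (bidiag \<mu>) (right_eigvecs \<mu>)) i k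
      = matmul {..<n} (matmul {..<n} (left_eigvecs \<mu>) (bidiag \<mu>)) (right_eigvecs \<mu>) i k"
    by (simp add: matmul_assoc)
  moreover have "matmul {..<n} (left_eigvecs \<mu>) (matmul {..<n} (bidiag \<mu>) (right_eigvecs \<mu>)) i k = \<mu> k * S"
    unfolding S_def matmul_def[of _ "left_eigvecs \<mu>"] using assms(2)
    by (simp add: bidiag_right_eigvecs sum_distrib_left mult.left_commute)
  moreover have "matmul {..<n} (matmul {..<n} (left_eigvecs \<mu>) (bidiag \<mu>)) (right_eigvecs \<mu>) i k = \<mu> i * S"
    unfolding S_def matmul_def[of _ _ "right_eigvecs \<mu>"] using assms(1)
    by (simp add: left_eigvecs_bidiag sum_distrib_left mult.assoc)
  moreover have "\<mu> k \<noteq> \<mu> i"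
    using distinct less assms by (auto dest: inj_onD)
  ultimately have "S = 0" by auto
  thus ?thesis using less unfolding S_def id_mat_def by simp
next
  case equal
  have "matmul {..<n} (left_eigvecs \<mu>) (right_eigvecs \<mu>) i k = (\<Sum>l<n. if l = i then 1 else 0)"
    unfolding matmul_def using equal by (intro sum.cong) (auto simp: left_eigvecs_def right_eigvecs_def)
  thus ?thesis using equal assms by (simp add: id_mat_def)
next
  case greater
  have "matmul {..<n} (left_eigvecs \<mu>) (right_eigvecs \<mu>) i k = (\<Sum>l<n. 0)"
    unfolding matmul_def using greater by (intro sum.cong) (auto simp: left_eigvecs_def right_eigvecs_def)
  thus ?thesis using greater by (simp add: id_mat_def)
qed

text \<open>A one-sided inverse of a square matrix is two-sided; here this follows by cancelling
  the unitriangular matrix \<open>right_eigvecs \<mu>\<close> from \<open>(V W - 1) V = V (W V) - V = 0\<close>.\<close>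
lemma right_left_eigvecs_inverse:
  assumes "i < n" and "k < n"
  shows "matmul {..<n} (right_eigvecs \<mu>) (left_eigvecs \<mu>) i k = id_mat i k"
proof -
  define E where "E l = matmul {..<n} (right_eigvecs \<mu>) (left_eigvecs \<mu>) i l - id_mat i l" for l
  have "E l = 0" if "l < n" for l
  proof (rule unitriangular_cancel_right[OF _ _ _ that])
    show "right_eigvecs \<mu> l j = 0" if "j < l" for l j
      using that by (simp add: right_eigvecs_def)
    show "right_eigvecs \<mu> j j = 1" for j
      by (simp add: right_eigvecs_def)
  next
    fix j assume j: "j < n"
    have "(\<Sum>l<n. matmul {..<n} (right_eigvecs \<mu>) (left_eigvecs \<mu>) i l * right_eigvecs \<mu> l j)
        = matmul {..<n} (right_eigvecs \<mu>) (matmul {..<n} (left_eigvecs \<mu>) (right_eigvecs \<mu>)) i j"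
      by (simp add: matmul_assoc[symmetric] matmul_def[of _ _ "right_eigvecs \<mu>"])
    also have "\<dots> = matmul {..<n} (right_eigvecs \<mu>) id_mat i j"
      by (rule matmul_cong) (simp_all add: left_right_eigvecs_inverse j)
    also have "\<dots> = right_eigvecs \<mu> i j"
      using j by (simp add: matmul_id_right)
    finally have "(\<Sum>l<n. matmul {..<n} (right_eigvecs \<mu>) (left_eigvecs \<mu>) i l * right_eigvecs \<mu> l j)
        = right_eigvecs \<mu> i j" .
    moreover have "(\<Sum>l<n. id_mat i l * right_eigvecs \<mu> l j) = right_eigvecs \<mu> i j"
      using matmul_id_left[of "{..<n}" i "right_eigvecs \<mu>" j] assms(1) by (simp add: matmul_def)
    ultimately show "(\<Sum>l<n. E l * right_eigvecs \<mu> l j) = 0"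
      unfolding E_def by (simp add: left_diff_distrib sum_subtractf)
  qed
  thus ?thesis using assms(2) unfolding E_def by simp
qed

end

definition blocks :: "nat list \<Rightarrow> (nat \<times> nat) set" where
  "blocks qs = (SIGMA j:{..<length qs}. {..<qs ! j})"

definition block_diag :: "(nat \<Rightarrow> nat \<Rightarrow> nat \<Rightarrow> 'k::comm_semiring_1) \<Rightarrow> nat \<times> nat \<Rightarrow> nat \<times> nat \<Rightarrow> 'k" where
  "block_diag F u' u = (if fst u' = fst u then F (fst u) (snd u') (snd u) else 0)"

lemma finite_blocks: "finite (blocks qs)"
  unfolding blocks_def by auto

lemma card_blocks: "card (blocks qs) = sum_list qs"
  unfolding blocks_def by (simp add: card_SigmaI sum_list_sum_nth atLeast0LessThan)

lemma sum_blocks_single_block: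
  assumes "j < length qs" and "\<And>u. u \<in> blocks qs \<Longrightarrow> fst u \<noteq> j \<Longrightarrow> G u = 0"
  shows "(\<Sum>u\<in>blocks qs. G u) = (\<Sum>k<qs ! j. G (j, k))"
proof -
  have "(\<Sum>u\<in>blocks qs. G u) = (\<Sum>u\<in>Pair j ` {..<qs ! j}. G u)"
    by (rule sum.mono_neutral_right[OF finite_blocks]) (use assms in \<open>force simp: blocks_def\<close>)+
  also have "\<dots> = (\<Sum>k<qs ! j. G (j, k))"
    by (subst sum.reindex) (auto simp: inj_on_def)
  finally show ?thesis .
qed

lemma matmul_block_diag:
  assumes "(j, i) \<in> blocks qs"
  shows "matmul (blocks qs) (block_diag F) (block_diag G) (j, i) (j', k)
    = (if j = j' then matmul {..<qs ! j} (F j) (G j) i k else 0)"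
proof (cases "j = j'")
  case True
  have "matmul (blocks qs) (block_diag F) (block_diag G) (j, i) (j', k)
      = (\<Sum>l<qs ! j. block_diag F (j, i) (j, l) * block_diag G (j, l) (j', k))"
    unfolding matmul_def using assms by (intro sum_blocks_single_block) (auto simp: blocks_def block_diag_def)
  thus ?thesis using True by (simp add: block_diag_def matmul_def)
next
  case False
  thus ?thesis unfolding matmul_def block_diag_def by (auto intro: sum.neutral)
qed

lemma rep_iso_band_rep_diagonalise:
  fixes \<mu> :: "nat \<Rightarrow> nat \<Rightarrow> 'k::field" and s t :: "'a \<Rightarrow> 'v"
  assumes distinct: "\<And>j. j < length qs \<Longrightarrow> inj_on (\<mu> j) {..<qs ! j}"
  shows "rep_iso Q0 Q1 s t
    (band_space s t B (blocks qs)) (band_rep B (block_diag (\<lambda>j. bidiag (\<mu> j))))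
    (band_space s t B (blocks qs)) (band_rep B (diag_mat (\<lambda>u. \<mu> (fst u) (snd u))))"
proof (rule rep_iso_band_rep_conj[OF finite_blocks])
  fix u' u assume u': "u' \<in> blocks qs" and u: "u \<in> blocks qs"
  obtain j i j' k where u'_eq: "u' = (j, i)" and u_eq: "u = (j', k)"
    by (cases u', cases u)
  have j: "j < length qs" and i: "i < qs ! j" and k: "k < qs ! j'"
    using u' u unfolding u'_eq u_eq blocks_def by auto
  show "matmul (blocks qs) (block_diag (\<lambda>j. left_eigvecs (\<mu> j))) (block_diag (\<lambda>j. right_eigvecs (\<mu> j))) u' u
      = id_mat u' u"
    using u' j i k unfolding u'_eq u_eq
    by (auto simp: matmul_block_diag left_right_eigvecs_inverse[OF distinct] id_mat_def)
  show "matmul (blocks qs) (block_diag (\<lambda>j. right_eigvecs (\<mu> j))) (block_diag (\<lambda>j. left_eigvecs (\<mu> j))) u' u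
      = id_mat u' u"
    using u' j i k unfolding u'_eq u_eq
    by (auto simp: matmul_block_diag right_left_eigvecs_inverse[OF distinct] id_mat_def)
  show "matmul (blocks qs) (block_diag (\<lambda>j. left_eigvecs (\<mu> j))) (block_diag (\<lambda>j. bidiag (\<mu> j))) u' u
      = matmul (blocks qs) (diag_mat (\<lambda>u. \<mu> (fst u) (snd u))) (block_diag (\<lambda>j. left_eigvecs (\<mu> j))) u' u"
    using u' j i k unfolding u'_eq u_eq
    by (auto simp: matmul_block_diag matmul_diag_left[OF finite_blocks] left_eigvecs_bidiag[OF distinct]
        block_diag_def)
qed

lemma letter_action_block_diag:
  "letter_action (block_diag F) p (j', k') (j, k) = (if j' = j then letter_action (F j) p k' k else 0)"
  by (simp add: letter_action_def block_diag_def id_mat_def)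

lemma letter_action_diag_mat:
  "letter_action (diag_mat \<mu>) p u' u = (if u' = u then letter_action (jordan (\<mu> u)) p 0 0 else 0)"
  by (simp add: letter_action_def diag_mat_def jordan_def id_mat_def)

lemma bandM_eq_band_rep: "bandM B lam a (r, k') (c, k) = band_rep B (jordan lam) a (r, k') (c, k)"
  unfolding bandM_def band_rep_def prod.case fst_conv snd_conv
  by (intro sum.cong) (auto simp: letter_entry_def letter_action_def id_mat_def Let_def)

lemma finite_bsumV: "finite (bsumV s t B qs x)"
proof (rule finite_subset)
  show "bsumV s t B qs x \<subseteq> (SIGMA j:{..<length qs}. {..<length B} \<times> {..<qs ! j})"
    by (auto simp: bsumV_def bandV_def)
qed auto

lemma rep_iso_bsum_band_rep:
  fixes s t :: "'a \<Rightarrow> 'v" and ls :: "'k::field list"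
  shows "rep_iso Q0 Q1 s t (bsumV s t B qs) (bsumM B ls)
    (band_space s t B (blocks qs)) (band_rep B (block_diag (\<lambda>j. jordan (ls ! j))))"
proof (rule rep_iso_reindex[where \<phi> = "\<lambda>(p, j, k). (j, p, k)"])
  fix x
  show "bij_betw (\<lambda>(p, j, k). (j, p, k)) (band_space s t B (blocks qs) x) (bsumV s t B qs x)"
    by (rule bij_betw_byWitness[where f' = "\<lambda>(j, p, k). (p, j, k)"])
      (auto simp: band_space_def band_positions_def blocks_def bsumV_def bandV_def)
  show "finite (band_space s t B (blocks qs) x)"
    by (rule finite_band_space[OF finite_blocks])
next
  fix a and rk cl :: "nat \<times> nat \<times> nat"
  obtain r j' k' c j k where "rk = (r, j', k')" and "cl = (c, j, k)"
    by (cases rk, cases cl) auto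
  thus "band_rep B (block_diag (\<lambda>j. jordan (ls ! j))) a rk cl
      = bsumM B ls a ((\<lambda>(p, j, k). (j, p, k)) rk) ((\<lambda>(p, j, k). (j, p, k)) cl)"
    by (simp add: band_rep_def bsumM_def bandM_eq_band_rep letter_action_block_diag if_distrib[of "\<lambda>x. _ * x"]
        cong: if_cong)
qed

lemma rep_iso_band_rep_diag_bsum:
  fixes s t :: "'a \<Rightarrow> 'v" and \<mu> :: "'c \<Rightarrow> 'k::field"
  assumes \<psi>: "bij_betw \<psi> {..<q} I" and finI: "finite I"
  shows "rep_iso Q0 Q1 s t (band_space s t B I) (band_rep B (diag_mat \<mu>))
    (bsumV s t B (replicate q 1)) (bsumM B (map (\<lambda>i. \<mu> (\<psi> i)) [0..<q]))"
proof (rule rep_iso_reindex[where \<phi> = "\<lambda>(i, p, k). (p, \<psi> i)"])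
  fix x
  show "bij_betw (\<lambda>(i, p, k). (p, \<psi> i)) (bsumV s t B (replicate q 1) x) (band_space s t B I x)"
    by (rule bij_betw_byWitness[where f' = "\<lambda>(p, u). (inv_into {..<q} \<psi> u, p, 0)"])
      (use \<psi> in \<open>auto simp: band_space_def band_positions_def bsumV_def bandV_def bij_betw_def inv_into_into\<close>)
  show "finite (bsumV s t B (replicate q 1) x)"
    by (rule finite_bsumV)
next
  fix a and rk cl :: "nat \<times> nat \<times> nat"
  assume "rk \<in> bsumV s t B (replicate q 1) (t a)" and "cl \<in> bsumV s t B (replicate q 1) (s a)"
  moreover obtain i' r k' i c k where rk_eq: "rk = (i', r, k')" and cl_eq: "cl = (i, c, k)"
    by (cases rk, cases cl) auto
  ultimately have "i' < q" "i < q" "k' = 0" "k = 0"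
    by (auto simp: bsumV_def bandV_def)
  moreover from this have "\<psi> i' = \<psi> i \<longleftrightarrow> i' = i"
    using \<psi> unfolding bij_betw_def inj_on_def by auto
  ultimately show "bsumM B (map (\<lambda>i. \<mu> (\<psi> i)) [0..<q]) a rk cl
      = band_rep B (diag_mat \<mu>) a ((\<lambda>(i, p, k). (p, \<psi> i)) rk) ((\<lambda>(i, p, k). (p, \<psi> i)) cl)"
    unfolding rk_eq cl_eq
    by (simp add: band_rep_def bsumM_def bandM_eq_band_rep letter_action_diag_mat if_distrib[of "\<lambda>x. _ * x"]
        cong: if_cong)
qed

subsection \<open>Degenerating to the Jordan blocks\<close>

definition simple_band_sum_family ::
  "'v set \<Rightarrow> 'a set \<Rightarrow> ('a \<Rightarrow> 'v) \<Rightarrow> ('a \<Rightarrow> 'v) \<Rightarrow> ('a \<times> 'a) set \<Rightarrow> ('v \<Rightarrow> nat) \<Rightarrow>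
    ('a \<times> bool) list \<Rightarrow> nat \<Rightarrow> ('a \<Rightarrow> nat \<Rightarrow> nat \<Rightarrow> 'k::field) set" where
  "simple_band_sum_family Q0 Q1 s t R d B q =
     \<Union>{orbit Q0 Q1 s t R d (bsumV s t B (replicate q 1)) (bsumM B ls) | ls :: 'k list. length ls = q \<and> 0 \<notin> set ls}"

lemma simple_band_sum_family_subset_band_family:
  "simple_band_sum_family Q0 Q1 s t R (\<lambda>x. q * band_dim s t B x) B q
    \<subseteq> (band_family Q0 Q1 s t R B q :: ('a \<Rightarrow> nat \<Rightarrow> nat \<Rightarrow> 'k::field) set)"
  unfolding simple_band_sum_family_def band_family_def
proof (intro Sup_subset_mono subsetI)
  fix orb :: "('a \<Rightarrow> nat \<Rightarrow> nat \<Rightarrow> 'k) set"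
  assume "orb \<in> {orbit Q0 Q1 s t R (\<lambda>x. q * band_dim s t B x) (bsumV s t B (replicate q 1)) (bsumM B ls)
    | ls :: 'k list. length ls = q \<and> 0 \<notin> set ls}"
  then obtain ls :: "'k list" where ls: "length ls = q" "0 \<notin> set ls"
    and orb: "orb = orbit Q0 Q1 s t R (\<lambda>x. q * band_dim s t B x) (bsumV s t B (replicate q 1)) (bsumM B ls)"
    by blast
  show "orb \<in> {orbit Q0 Q1 s t R (\<lambda>x. q * band_dim s t B x) (bsumV s t B qs) (bsumM B ls) | qs ls.
      (\<forall>j\<in>set qs. j \<ge> 1) \<and> sum_list qs = q \<and> length ls = length qs \<and> 0 \<notin> set ls}"
    unfolding mem_Collect_eq orb
    by (intro exI[of _ "replicate q 1"] exI[of _ ls] conjI refl) (simp_all add: ls sum_list_replicate)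
qed

lemma in_simple_band_sum_family:
  fixes \<mu> :: "nat \<Rightarrow> nat \<Rightarrow> 'k::field"
  assumes "Y \<in> modvar Q1 s t R d"
    and iso: "rep_iso Q0 Q1 s t (\<lambda>x. {..<d x}) Y
      (band_space s t B (blocks qs)) (band_rep B (block_diag (\<lambda>j. bidiag (\<mu> j))))"
    and distinct: "\<And>j. j < length qs \<Longrightarrow> inj_on (\<mu> j) {..<qs ! j}"
    and nonzero: "\<And>u. u \<in> blocks qs \<Longrightarrow> \<mu> (fst u) (snd u) \<noteq> 0"
    and "sum_list qs = q"
  shows "Y \<in> simple_band_sum_family Q0 Q1 s t R d B q"
proof -
  have "card {..<q} = card (blocks qs)"
    by (simp add: card_blocks \<open>sum_list qs = q\<close>)
  then obtain \<psi> where \<psi>: "bij_betw \<psi> {..<q} (blocks qs)"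
    using finite_same_card_bij[OF finite_lessThan finite_blocks] by blast
  define ls where "ls = map (\<lambda>i. \<mu> (fst (\<psi> i)) (snd (\<psi> i))) [0..<q]"
  have "rep_iso Q0 Q1 s t (\<lambda>x. {..<d x}) Y (bsumV s t B (replicate q 1)) (bsumM B ls)"
    unfolding ls_def
    by (intro rep_iso_trans[OF finite_band_space[OF finite_blocks] iso]
        rep_iso_trans[OF finite_band_space[OF finite_blocks] rep_iso_band_rep_diagonalise[OF distinct]]
        rep_iso_band_rep_diag_bsum[OF \<psi> finite_blocks])
  with assms(1) have "Y \<in> orbit Q0 Q1 s t R d (bsumV s t B (replicate q 1)) (bsumM B ls)"
    unfolding orbit_def by blast
  moreover have "0 \<notin> set ls"
    using nonzero bij_betw_apply[OF \<psi>] by (auto simp: ls_def)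
  moreover have "length ls = q"
    by (simp add: ls_def)
  ultimately show ?thesis
    unfolding simple_band_sum_family_def by blast
qed

lemma finite_nongeneric_perturbations:
  fixes c :: "nat \<Rightarrow> 'k::field"
  assumes c: "inj c" and ls: "length ls = length qs" "0 \<notin> set ls"
  shows "finite {\<tau>. \<not> ((\<forall>j<length qs. inj_on (\<lambda>k. ls ! j + \<tau> * c k) {..<qs ! j}) \<and>
    (\<forall>u\<in>blocks qs. ls ! fst u + \<tau> * c (snd u) \<noteq> 0))}"
proof (rule finite_subset)
  show "{\<tau>. \<not> ((\<forall>j<length qs. inj_on (\<lambda>k. ls ! j + \<tau> * c k) {..<qs ! j}) \<and>
      (\<forall>u\<in>blocks qs. ls ! fst u + \<tau> * c (snd u) \<noteq> 0))}
    \<subseteq> insert 0 ((\<lambda>u. - (ls ! fst u) / c (snd u)) ` blocks qs)"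
  proof
    fix \<tau> assume \<tau>: "\<tau> \<in> {\<tau>. \<not> ((\<forall>j<length qs. inj_on (\<lambda>k. ls ! j + \<tau> * c k) {..<qs ! j}) \<and>
      (\<forall>u\<in>blocks qs. ls ! fst u + \<tau> * c (snd u) \<noteq> 0))}"
    show "\<tau> \<in> insert 0 ((\<lambda>u. - (ls ! fst u) / c (snd u)) ` blocks qs)"
    proof (cases "\<tau> = 0")
      case False
      with c have "inj_on (\<lambda>k. ls ! j + \<tau> * c k) {..<qs ! j}" for j
        by (auto simp: inj_on_def inj_def)
      with \<tau> obtain u where u: "u \<in> blocks qs" and root: "ls ! fst u + \<tau> * c (snd u) = 0"
        by auto
      have "fst u < length ls"
        using u ls(1) by (auto simp: blocks_def)
      hence "ls ! fst u \<noteq> 0"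
        using ls(2) nth_mem by metis
      hence "c (snd u) \<noteq> 0"
        using root by auto
      hence "\<tau> = - (ls ! fst u) / c (snd u)"
        using root by (simp add: field_simps add_eq_0_iff)
      thus ?thesis
        using u by blast
    qed simp
  qed
qed (simp add: finite_blocks)

lemma (in transport_of_structure) transport_curve_in_zclosure:
  assumes "infinite (UNIV :: 'k set)"
    and "R \<subseteq> {(a, b). a \<in> Q1 \<and> b \<in> Q1 \<and> t a = s b}"
    and "\<And>\<tau> a b k k'. (a, b) \<in> R \<Longrightarrow> matmul (W (t a)) (N \<tau> b) (N \<tau> a) k k' = 0"
    and "\<And>a k k'. is_polyfun (\<lambda>\<tau>. N \<tau> a k k')"
    and "finite {\<tau>. transport (N \<tau>) \<notin> S}"
  shows "transport (N \<tau>\<^sub>0) \<in> zclosure (modvar Q1 s t R d) S"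
  using assms by (intro polyfun_curve_in_zclosure is_polyfun_transport transport_in_modvar)

lemma transport_band_rep_in_zclosure:
  fixes ls :: "'k::field list"
  assumes inverse: "mutually_inverse Q0 (\<lambda>x. {..<d x}) (band_space s t B (blocks qs)) f g"
    and targets: "t ` Q1 \<subseteq> Q0"
    and infinite: "infinite (UNIV :: 'k set)"
    and composable: "R \<subseteq> {(a, b). a \<in> Q1 \<and> b \<in> Q1 \<and> t a = s b}"
    and band: "is_band Q1 s t R B"
    and qs: "sum_list qs = q" and ls: "length ls = length qs" "0 \<notin> set ls"
  shows "transport_of_structure.transport Q1 s t d (band_space s t B (blocks qs)) f g
      (band_rep B (block_diag (\<lambda>j. jordan (ls ! j))))
    \<in> zclosure (modvar Q1 s t R d) (simple_band_sum_family Q0 Q1 s t R d B q)"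
proof -
  interpret transport_of_structure Q0 Q1 s t d "band_space s t B (blocks qs)" f g
    using inverse targets finite_band_space[OF finite_blocks] by unfold_locales
  obtain c :: "nat \<Rightarrow> 'k" where c: "inj c"
    using infinite_iff_countable_subset[THEN iffD1, OF infinite] by blast
  define \<mu> where "\<mu> \<tau> j = (\<lambda>k. ls ! j + \<tau> * c k)" for \<tau> j
  define N where "N \<tau> = band_rep B (block_diag (\<lambda>j. bidiag (\<mu> \<tau> j)))" for \<tau>
  define bad where "bad = {\<tau>. \<not> ((\<forall>j<length qs. inj_on (\<mu> \<tau> j) {..<qs ! j}) \<and>
    (\<forall>u\<in>blocks qs. \<mu> \<tau> (fst u) (snd u) \<noteq> 0))}"
  have "block_diag (\<lambda>j. bidiag (\<mu> 0 j)) = block_diag (\<lambda>j. jordan (ls ! j))"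
    by (intro ext) (simp add: block_diag_def bidiag_def jordan_def \<mu>_def)
  hence N_0: "N 0 = band_rep B (block_diag (\<lambda>j. jordan (ls ! j)))"
    by (simp add: N_def)
  have "transport (N \<tau>) \<in> simple_band_sum_family Q0 Q1 s t R d B q" if "\<tau> \<notin> bad" for \<tau>
  proof (rule in_simple_band_sum_family[OF _ _ _ _ qs])
    show "transport (N \<tau>) \<in> modvar Q1 s t R d"
      using composable by (rule transport_in_modvar) (simp add: matmul_def N_def band_rep_relation[OF band])
    show "rep_iso Q0 Q1 s t (\<lambda>x. {..<d x}) (transport (N \<tau>)) (band_space s t B (blocks qs))
        (band_rep B (block_diag (\<lambda>j. bidiag (\<mu> \<tau> j))))"
      unfolding N_def by (rule rep_iso_transport)
    show "inj_on (\<mu> \<tau> j) {..<qs ! j}" if "j < length qs" for j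
      using \<open>\<tau> \<notin> bad\<close> that by (simp add: bad_def)
    show "\<mu> \<tau> (fst u) (snd u) \<noteq> 0" if "u \<in> blocks qs" for u
      using \<open>\<tau> \<notin> bad\<close> that by (simp add: bad_def)
  qed
  hence "{\<tau>. transport (N \<tau>) \<notin> simple_band_sum_family Q0 Q1 s t R d B q} \<subseteq> bad"
    by blast
  moreover have "finite bad"
    unfolding bad_def \<mu>_def by (rule finite_nongeneric_perturbations[OF c ls])
  ultimately have finite_bad: "finite {\<tau>. transport (N \<tau>) \<notin> simple_band_sum_family Q0 Q1 s t R d B q}"
    by (rule finite_subset)
  have "is_polyfun (\<lambda>\<tau>. block_diag (\<lambda>j. bidiag (\<mu> \<tau> j)) u' u)" for u' u
    unfolding block_diag_def bidiag_def \<mu>_def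
    by (intro is_polyfun_if is_polyfun_add is_polyfun_mult is_polyfun_const is_polyfun_ident)
  hence polyfun: "is_polyfun (\<lambda>\<tau>. N \<tau> a k k')" for a k k'
    unfolding N_def by (rule is_polyfun_band_rep)
  have "transport (N 0) \<in> zclosure (modvar Q1 s t R d) (simple_band_sum_family Q0 Q1 s t R d B q)"
    by (rule transport_curve_in_zclosure[OF infinite composable _ polyfun finite_bad])
      (simp add: matmul_def N_def band_rep_relation[OF band])
  thus ?thesis
    unfolding N_0 .
qed

lemma band_orbit_subset_zclosure:
  fixes X :: "'a \<Rightarrow> nat \<Rightarrow> nat \<Rightarrow> 'k::alg_closed_field"
  assumes targets: "t ` Q1 \<subseteq> Q0"
    and composable: "R \<subseteq> {(a, b). a \<in> Q1 \<and> b \<in> Q1 \<and> t a = s b}"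
    and band: "is_band Q1 s t R B"
    and qs: "sum_list qs = q" and ls: "length ls = length qs" "0 \<notin> set ls"
    and X: "X \<in> orbit Q0 Q1 s t R d (bsumV s t B qs) (bsumM B ls)"
  shows "X \<in> zclosure (modvar Q1 s t R d) (simple_band_sum_family Q0 Q1 s t R d B q)"
proof -
  define W where "W = band_space s t B (blocks qs)"
  define N where "N = band_rep B (block_diag (\<lambda>j. jordan (ls ! j)))"
  have X_mod: "X \<in> modvar Q1 s t R d"
    and X_iso: "rep_iso Q0 Q1 s t (\<lambda>x. {..<d x}) X (bsumV s t B qs) (bsumM B ls)"
    using X unfolding orbit_def by blast+
  from X_iso have "rep_iso Q0 Q1 s t (\<lambda>x. {..<d x}) X W N"
    unfolding W_def N_def by (rule rep_iso_trans[OF finite_bsumV _ rep_iso_bsum_band_rep])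
  then obtain f g where inverse: "mutually_inverse Q0 (\<lambda>x. {..<d x}) W f g"
    and intertwines: "\<forall>a\<in>Q1. \<forall>r\<in>W (t a). \<forall>c\<in>{..<d (s a)}.
      matmul (W (s a)) (N a) (f (s a)) r c = matmul {..<d (t a)} (f (t a)) (X a) r c"
    unfolding rep_iso_iff by blast
  interpret transport_of_structure Q0 Q1 s t d W f g
    using inverse targets finite_band_space[OF finite_blocks] unfolding W_def by unfold_locales
  have "transport N = X"
    using X_mod intertwines by (intro transport_eq) auto
  with transport_band_rep_in_zclosure[OF inverse[unfolded W_def] targets alg_closed_field_infinite
      composable band qs ls]
  show ?thesis
    unfolding N_def W_def by simp
qed

theorem mainTheorem1:
  fixes Q0 :: "'v set" and Q1 :: "'a set" and s t :: "'a \<Rightarrow> 'v"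
    and R :: "('a \<times> 'a) set" and B :: "('a \<times> bool) list" and q :: nat
  assumes "gentle Q0 Q1 s t R" and "fin_dim Q1 s t R"
    and "is_band Q1 s t R B" and "q \<ge> 1"
  shows "zclosure (modvar Q1 s t R (\<lambda>x. q * band_dim s t B x))
           (band_family Q0 Q1 s t R B q :: ('a \<Rightarrow> nat \<Rightarrow> nat \<Rightarrow> 'k::alg_closed_field) set)
       = zclosure (modvar Q1 s t R (\<lambda>x. q * band_dim s t B x))
           (\<Union>{orbit Q0 Q1 s t R (\<lambda>x. q * band_dim s t B x) (bsumV s t B (replicate q 1)) (bsumM B ls)
               | ls :: 'k list. length ls = q \<and> 0 \<notin> set ls})"
proof -
  let ?d = "\<lambda>x. q * band_dim s t B x"
  have targets: "t ` Q1 \<subseteq> Q0" and composable: "R \<subseteq> {(a, b). a \<in> Q1 \<and> b \<in> Q1 \<and> t a = s b}"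
    using assms(1) unfolding gentle_def quiver_def by auto
  have "band_family Q0 Q1 s t R B q
      \<subseteq> zclosure (modvar Q1 s t R ?d) (simple_band_sum_family Q0 Q1 s t R ?d B q :: (_ \<Rightarrow> _ \<Rightarrow> _ \<Rightarrow> 'k) set)"
  proof
    fix X :: "'a \<Rightarrow> nat \<Rightarrow> nat \<Rightarrow> 'k"
    assume "X \<in> band_family Q0 Q1 s t R B q"
    then obtain qs and ls :: "'k list" where "sum_list qs = q" "length ls = length qs" "0 \<notin> set ls"
      and "X \<in> orbit Q0 Q1 s t R ?d (bsumV s t B qs) (bsumM B ls)"
      unfolding band_family_def by blast
    thus "X \<in> zclosure (modvar Q1 s t R ?d) (simple_band_sum_family Q0 Q1 s t R ?d B q)"
      by (rule band_orbit_subset_zclosure[OF targets composable assms(3)])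
  qed
  thus ?thesis
    unfolding simple_band_sum_family_def[symmetric]
    by (rule antisym[OF zclosure_subset_zclosure zclosure_mono[OF simple_band_sum_family_subset_band_family]])
qed

end
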